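(* For every positive integer $d$ and every $\epsilon\in(0,1)$ there exist $n_0$ and, for each $n\ge n_0$, a family $\mathcal{C}_n$ of subsets of $[n]^d$ such that: (i) every sum-free subset of $[n]^d$ is contained in some member of $\mathcal{C}_n$; (ii) every member of $\mathcal{C}_n$ contains at most $\epsilon n^{2d}$ Schur triples; (iii) $\log_2|\mathcal{C}_n|=o(n^d)$ as $n\to\infty$.
   Context: $[n]=\{1,\dots,n\}$, $[n]^d\subset\mathbb{Z}^d$ with coordinatewise addition. A set is sum-free if there are no $a,b,c$ in it (not necessarily distinct) with $a+b=c$. A Schur triple in a set $A$ is a set $\{a,b,c\}\subseteq A$ of three distinct elements with $a+b=c$. *)

theory Defs
  imports Complex_Main "HOL-Library.Landau_Symbols"
begin

definition grid :: "nat \<Rightarrow> nat \<Rightarrow> int list set" where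
  "grid n d = {x. length x = d \<and> set x \<subseteq> {1..int n}}"

definition vadd :: "int list \<Rightarrow> int list \<Rightarrow> int list" where
  "vadd x y = map2 (+) x y"

definition sum_free :: "int list set \<Rightarrow> bool" where
  "sum_free A \<longleftrightarrow> (\<forall>a\<in>A. \<forall>b\<in>A. \<forall>c\<in>A. vadd a b \<noteq> c)"

definition schur_triples :: "int list set \<Rightarrow> int list set set" where
  "schur_triples A = {T. \<exists>a b c. T = {a, b, c} \<and> T \<subseteq> A \<and> card T = 3 \<and> vadd a b = c}"

end

theory Submission
  imports Defs "HOL-Real_Asymp.Real_Asymp"
begin

(*
  Let N = |G| for a finite set G of integer vectors of one length. If a set B in G has more than
  eps N^2 pairs (a, b) with a, b, a + b in B, then more than eps N / 2 elements a of B have degree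
  |{b in B. a + b in B}| at least eps N / 2. Let A in B be sum-free. Either A contains fewer than
  q ~ sqrt N of these high-degree elements, and A lies in the low-degree part of B together with
  them; or q of them, T1, span the graph of shifts b -> t + b (t in T1) on B, which has at least
  q eps N / 2 edges and in which A is independent. A greedy fingerprint T2 in A of size
  O(sqrt N / eps) then confines A to T2 and the vertices outside the neighbourhood of T2 that have
  few neighbours outside it, and counting edges shows that this set misses eps N / 8 elements of B.
  After about 8 / eps rounds starting from G every container has at most eps N^2 Schur triples.
  A container is determined by the fingerprints chosen in each round, so the logarithm of their
  number is O(sqrt N log N / eps^2) = o(N).
*)

section \<open>Iterated refinement of containers\<close>

primrec refine_containers ::
  "('a set \<Rightarrow> bool) \<Rightarrow> ('a set \<Rightarrow> 'a set set) \<Rightarrow> 'a set \<Rightarrow> nat \<Rightarrow> 'a set set" where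
  "refine_containers good step G 0 = {G}"
| "refine_containers good step G (Suc k) =
     (\<Union>B \<in> refine_containers good step G k. if good B then {B} else step B)"

context
  fixes good :: "'a set \<Rightarrow> bool" and step :: "'a set \<Rightarrow> 'a set set" and G :: "'a set"
  assumes step_subset: "\<And>B. step B \<subseteq> Pow B"
begin

lemma refine_containers_subset: "B \<in> refine_containers good step G k \<Longrightarrow> B \<subseteq> G"
proof (induction k arbitrary: B)
  case (Suc k)
  then obtain B0 where "B0 \<in> refine_containers good step G k" "B = B0 \<or> B \<in> step B0"
    by (auto split: if_splits)
  with Suc.IH step_subset show ?case by blast
qed simp

lemma refine_containers_cover:
  assumes "A \<subseteq> G"
    and cover: "\<And>B. B \<subseteq> G \<Longrightarrow> A \<subseteq> B \<Longrightarrow> \<not> good B \<Longrightarrow> \<exists>B' \<in> step B. A \<subseteq> B'"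
  shows "\<exists>B \<in> refine_containers good step G k. A \<subseteq> B"
proof (induction k)
  case 0
  show ?case using assms(1) by simp
next
  case (Suc k)
  then obtain B where B: "B \<in> refine_containers good step G k" "A \<subseteq> B" ..
  show ?case
  proof (cases "good B")
    case True
    with B(1) have "B \<in> refine_containers good step G (Suc k)" by auto
    with B(2) show ?thesis ..
  next
    case False
    obtain B' where B': "B' \<in> step B" "A \<subseteq> B'"
      using cover[OF refine_containers_subset[OF B(1)] B(2) False] ..
    with B(1) False have "B' \<in> refine_containers good step G (Suc k)" by auto
    with B'(2) show ?thesis ..
  qed
qed

lemma refine_containers_shrink:
  fixes \<delta> :: real
  assumes shrink: "\<And>B B'. B \<subseteq> G \<Longrightarrow> \<not> good B \<Longrightarrow> B' \<in> step B \<Longrightarrow> card B' + \<delta> \<le> card B"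
  shows "B \<in> refine_containers good step G k \<Longrightarrow> good B \<or> card B + k * \<delta> \<le> card G"
proof (induction k arbitrary: B)
  case (Suc k)
  then obtain B0 where B0: "B0 \<in> refine_containers good step G k"
    and "good B0 \<and> B = B0 \<or> \<not> good B0 \<and> B \<in> step B0"
    by (auto split: if_splits)
  then consider "good B" | "\<not> good B0" "B \<in> step B0" by blast
  then show ?case
  proof cases
    case 2
    with B0 Suc.IH have "card B0 + k * \<delta> \<le> card G" by blast
    moreover have "card B + \<delta> \<le> card B0"
      using shrink[OF refine_containers_subset[OF B0] 2] .
    ultimately show ?thesis by (simp add: algebra_simps)
  qed simp
qed simp

lemma card_refine_containers_le:
  assumes step_card: "\<And>B. B \<subseteq> G \<Longrightarrow> finite (step B) \<and> card (step B) \<le> M" and "1 \<le> M"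
  shows "finite (refine_containers good step G k) \<and> card (refine_containers good step G k) \<le> M ^ k"
proof (induction k)
  case (Suc k)
  let ?F = "refine_containers good step G k"
  have each: "finite (if good B then {B} else step B) \<and> card (if good B then {B} else step B) \<le> M"
    if "B \<in> ?F" for B
    using step_card[OF refine_containers_subset[OF that]] \<open>1 \<le> M\<close> by auto
  have "card (refine_containers good step G (Suc k)) \<le> (\<Sum>B\<in>?F. card (if good B then {B} else step B))"
    unfolding refine_containers.simps using Suc.IH by (intro card_UN_le) simp
  also have "\<dots> \<le> (\<Sum>B\<in>?F. M)"
    by (rule sum_mono) (use each in blast)
  also have "\<dots> = card ?F * M"
    by simp
  also have "\<dots> \<le> M ^ Suc k"
    using Suc.IH by (simp add: mult.commute)
  finally have "card (refine_containers good step G (Suc k)) \<le> M ^ Suc k" .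
  moreover have "finite (refine_containers good step G (Suc k))"
    unfolding refine_containers.simps using Suc.IH each by blast
  ultimately show ?case by blast
qed simp

end

section \<open>Fingerprints in graphs\<close>

lemma fingerprint_exists:
  fixes nbr :: "'a \<Rightarrow> 'a set" and D :: real
  assumes "finite V" and nbr_V: "\<And>v. nbr v \<subseteq> V" and "0 < D" and "finite I"
  shows "\<exists>T \<subseteq> I. card T * D \<le> card V \<and> (\<forall>v \<in> I. card (nbr v - \<Union>(nbr ` T)) < D)"
proof -
  let ?P = "\<lambda>T. T \<subseteq> I \<and> card T * D \<le> card (\<Union>(nbr ` T))"
  have bounded: "card (\<Union>(nbr ` T)) \<le> card V" for T
    using nbr_V \<open>finite V\<close> by (intro card_mono) auto
  (* The greedy algorithm, phrased as a maximality argument. *)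
  have "\<exists>T. ?P T \<and> (\<forall>T'. ?P T' \<longrightarrow> card (\<Union>(nbr ` T')) \<le> card (\<Union>(nbr ` T)))"
    by (rule ex_has_greatest_nat[of ?P "{}" _ "card V + 1"]) (use bounded in \<open>auto simp: less_Suc_eq_le\<close>)
  then obtain T where T: "?P T" and maximal: "\<And>T'. ?P T' \<Longrightarrow> card (\<Union>(nbr ` T')) \<le> card (\<Union>(nbr ` T))"
    by blast
  have "card (nbr v - \<Union>(nbr ` T)) < D" if "v \<in> I" for v
  proof (rule ccontr)
    let ?U = "\<Union>(nbr ` T)"
    assume "\<not> card (nbr v - ?U) < D"
    then have new: "D \<le> card (nbr v - ?U)" by simp
    have "v \<notin> T"
    proof
      assume "v \<in> T"
      then have "nbr v - ?U = {}" by auto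
      with new \<open>0 < D\<close> show False by simp
    qed
    have "finite T" using T \<open>finite I\<close> finite_subset by blast
    have fin: "finite ?U" "finite (nbr v)"
      using nbr_V \<open>finite V\<close> by (auto intro: finite_subset)
    have "card (?U \<union> (nbr v - ?U)) = card ?U + card (nbr v - ?U)"
      using fin by (intro card_Un_disjoint) auto
    moreover have "\<Union>(nbr ` insert v T) = ?U \<union> (nbr v - ?U)" by auto
    ultimately have card_insert: "card (\<Union>(nbr ` insert v T)) = card ?U + card (nbr v - ?U)"
      by simp
    have "?P (insert v T)"
      using T that new \<open>v \<notin> T\<close> \<open>finite T\<close> card_insert by (simp add: algebra_simps)
    moreover have "0 < card (nbr v - ?U)"
      using new \<open>0 < D\<close> by (metis gr0I not_le of_nat_0)
    ultimately show False
      using maximal[of "insert v T"] card_insert by linarith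
  qed
  with T show ?thesis
    using bounded[of T] by (meson mult_right_mono order_trans of_nat_le_iff)
qed

lemma card_edges_le_degrees:
  fixes E :: "('a \<times> 'a) set" and D :: real
  assumes "finite B" "E \<subseteq> B \<times> B" "C \<subseteq> B"
    and out_degree: "\<And>v. card {w. (v, w) \<in> E} \<le> q"
    and in_degree: "\<And>w. card {v. (v, w) \<in> E} \<le> q"
    and inner_degree: "\<And>v. v \<in> C \<Longrightarrow> card {w \<in> C. (v, w) \<in> E} \<le> D"
  shows "card E \<le> 2 * q * card (B - C) + card C * D"
proof -
  let ?E1 = "Sigma (B - C) (\<lambda>v. {w. (v, w) \<in> E})"
  let ?E2 = "Sigma (B - C) (\<lambda>w. {v. (v, w) \<in> E})"
  let ?E3 = "Sigma C (\<lambda>v. {w \<in> C. (v, w) \<in> E})"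
  have fin: "finite {w. (v, w) \<in> E}" "finite {v. (v, w) \<in> E}" for v w
    using assms(1,2) by (auto intro: finite_subset[of _ B])
  have fin_C: "finite C"
    using assms(1,3) by (rule finite_subset[rotated])
  have fin_E: "finite ?E1" "finite ?E2" "finite ?E3"
    using fin fin_C assms(1) by auto
  have "E \<subseteq> ?E1 \<union> prod.swap ` ?E2 \<union> ?E3"
  proof
    fix e assume "e \<in> E"
    with assms(2) obtain v w where "e = (v, w)" "(v, w) \<in> E" "v \<in> B" "w \<in> B" by auto
    then show "e \<in> ?E1 \<union> prod.swap ` ?E2 \<union> ?E3"
      by (cases "v \<in> C"; cases "w \<in> C") (auto simp: image_iff)
  qed
  then have "card E \<le> card (?E1 \<union> prod.swap ` ?E2 \<union> ?E3)"
    using fin_E by (intro card_mono) auto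
  also have "\<dots> \<le> card ?E1 + card (prod.swap ` ?E2) + card ?E3"
    by (meson add_mono_thms_linordered_semiring(3) card_Un_le order_trans)
  also have "card (prod.swap ` ?E2) \<le> card ?E2"
    using fin_E(2) by (rule card_image_le)
  finally have "real (card E) \<le> card ?E1 + card ?E2 + card ?E3"
    by linarith
  also have "\<dots> = (\<Sum>v\<in>B - C. card {w. (v, w) \<in> E}) + (\<Sum>w\<in>B - C. card {v. (v, w) \<in> E})
      + (\<Sum>v\<in>C. real (card {w \<in> C. (v, w) \<in> E}))"
    using fin fin_C assms(1) by simp
  also have "\<dots> \<le> (\<Sum>v\<in>B - C. q) + (\<Sum>w\<in>B - C. q) + (\<Sum>v\<in>C. D)"
    by (intro add_mono sum_mono of_nat_mono out_degree in_degree inner_degree)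
  finally show ?thesis
    by simp
qed

section \<open>Shift graphs of Schur pairs\<close>

lemma vadd_left_cancel:
  "length y = length x \<Longrightarrow> length z = length x \<Longrightarrow> vadd x y = vadd x z \<Longrightarrow> y = z"
proof (induction x arbitrary: y z)
  case (Cons a x)
  then obtain b y' c z' where "y = b # y'" "z = c # z'"
    by (metis length_Suc_conv)
  with Cons show ?case by (auto simp: vadd_def)
qed simp

lemma vadd_right_cancel:
  "length x = length y \<Longrightarrow> length z = length y \<Longrightarrow> vadd x y = vadd z y \<Longrightarrow> x = z"
proof (induction y arbitrary: x z)
  case (Cons a y)
  then obtain b x' c z' where "x = b # x'" "z = c # z'"
    by (metis length_Suc_conv)
  with Cons show ?case by (auto simp: vadd_def)
qed simp

definition sum_pairs :: "int list set \<Rightarrow> (int list \<times> int list) set" where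
  "sum_pairs B = {(a, b). a \<in> B \<and> b \<in> B \<and> vadd a b \<in> B}"

lemma card_schur_triples_le_sum_pairs:
  assumes "finite B"
  shows "card (schur_triples B) \<le> card (sum_pairs B)"
proof -
  have "sum_pairs B \<subseteq> B \<times> B"
    by (auto simp: sum_pairs_def)
  with assms have "finite (sum_pairs B)"
    by (meson finite_SigmaI finite_subset)
  moreover have "schur_triples B \<subseteq> (\<lambda>(a, b). {a, b, vadd a b}) ` sum_pairs B"
    by (force simp: schur_triples_def sum_pairs_def)
  ultimately show ?thesis
    by (meson card_image_le card_mono finite_imageI order_trans)
qed

definition sum_degree :: "int list set \<Rightarrow> int list \<Rightarrow> nat" where
  "sum_degree B a = card {b \<in> B. vadd a b \<in> B}"

lemma card_sum_pairs:
  assumes "finite B"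
  shows "card (sum_pairs B) = (\<Sum>a\<in>B. sum_degree B a)"
proof -
  have "sum_pairs B = Sigma B (\<lambda>a. {b \<in> B. vadd a b \<in> B})"
    by (auto simp: sum_pairs_def)
  with assms show ?thesis
    by (simp add: sum_degree_def)
qed

definition high_degree :: "real \<Rightarrow> int list set \<Rightarrow> int list set" where
  "high_degree \<theta> B = {a \<in> B. \<theta> \<le> sum_degree B a}"

lemma high_degree_subset: "high_degree \<theta> B \<subseteq> B"
  by (auto simp: high_degree_def)

lemma card_sum_pairs_le_high_degree:
  fixes N \<theta> :: real
  assumes "finite B" "card B \<le> N" "0 \<le> \<theta>"
  shows "card (sum_pairs B) \<le> N * (card (high_degree \<theta> B) + \<theta>)"
proof -
  let ?X = "high_degree \<theta> B"
  have "real (card (sum_pairs B)) = (\<Sum>a\<in>?X. real (sum_degree B a)) + (\<Sum>a\<in>B - ?X. real (sum_degree B a))"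
    using card_sum_pairs[OF assms(1)] sum.subset_diff[OF high_degree_subset assms(1)]
    by (simp add: add.commute)
  also have "\<dots> \<le> (\<Sum>a\<in>?X. N) + (\<Sum>a\<in>B - ?X. \<theta>)"
  proof (intro add_mono sum_mono)
    show "real (sum_degree B a) \<le> N" for a
      using card_mono[OF assms(1), of "{b \<in> B. vadd a b \<in> B}"] assms(2)
      by (simp add: sum_degree_def)
    show "real (sum_degree B a) \<le> \<theta>" if "a \<in> B - ?X" for a
      using that by (auto simp: high_degree_def)
  qed
  also have "\<dots> \<le> card ?X * N + N * \<theta>"
    using card_mono[OF assms(1), of "B - ?X"] assms(2,3) by (simp add: mult_right_mono)
  finally show ?thesis
    by (simp add: algebra_simps)
qed

definition shift_edges :: "int list set \<Rightarrow> int list set \<Rightarrow> (int list \<times> int list) set" where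
  "shift_edges B T = {(b, vadd t b) | t b. t \<in> T \<and> b \<in> B \<and> vadd t b \<in> B}"

definition shift_nbrs :: "int list set \<Rightarrow> int list set \<Rightarrow> int list \<Rightarrow> int list set" where
  "shift_nbrs B T v = {w. (v, w) \<in> shift_edges B T \<or> (w, v) \<in> shift_edges B T}"

lemma shift_edges_subset: "shift_edges B T \<subseteq> B \<times> B"
  by (auto simp: shift_edges_def)

lemma shift_nbrs_subset: "shift_nbrs B T v \<subseteq> B"
  by (auto simp: shift_nbrs_def shift_edges_def)

lemma shift_nbrs_disjoint_if_sum_free:
  assumes "sum_free A" "T \<subseteq> A" "v \<in> A"
  shows "shift_nbrs B T v \<inter> A = {}"
proof -
  have "w \<notin> A" if "w \<in> shift_nbrs B T v" for w
  proof -
    from that obtain t where "t \<in> T" "w = vadd t v \<or> v = vadd t w"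
      by (auto simp: shift_nbrs_def shift_edges_def)
    with assms show ?thesis
      unfolding sum_free_def by blast
  qed
  then show ?thesis
    by blast
qed

lemma card_shift_edges:
  assumes "finite B" "T \<subseteq> B" and lengths: "\<And>x. x \<in> B \<Longrightarrow> length x = d"
  shows "card (shift_edges B T) = (\<Sum>t\<in>T. sum_degree B t)"
proof -
  let ?S = "Sigma T (\<lambda>t. {b \<in> B. vadd t b \<in> B})"
  have "shift_edges B T = (\<lambda>(t, b). (b, vadd t b)) ` ?S"
    by (auto simp: shift_edges_def)
  moreover have "inj_on (\<lambda>(t, b). (b, vadd t b)) ?S"
  proof (rule inj_onI, clarsimp)
    fix t b t' assume "t \<in> T" "b \<in> B" "t' \<in> T" "vadd t b = vadd t' b"
    with assms(2) lengths show "t = t'"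
      by (metis subsetD vadd_right_cancel)
  qed
  ultimately have "card (shift_edges B T) = card ?S"
    by (simp add: card_image)
  also have "\<dots> = (\<Sum>t\<in>T. sum_degree B t)"
    using assms(1) finite_subset[OF assms(2,1)] by (simp add: sum_degree_def)
  finally show ?thesis .
qed

lemma card_shift_edges_out_le:
  assumes "finite T"
  shows "card {w. (v, w) \<in> shift_edges B T} \<le> card T"
proof -
  have "{w. (v, w) \<in> shift_edges B T} \<subseteq> (\<lambda>t. vadd t v) ` T"
    by (auto simp: shift_edges_def)
  then show ?thesis
    using assms by (meson card_image_le card_mono finite_imageI order_trans)
qed

lemma card_shift_edges_in_le:
  assumes "finite B" "T \<subseteq> B" and lengths: "\<And>x. x \<in> B \<Longrightarrow> length x = d"
  shows "card {v. (v, w) \<in> shift_edges B T} \<le> card T"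
proof -
  have fin_T: "finite T"
    using assms(1,2) by (rule finite_subset[rotated])
  have "{v. (v, w) \<in> shift_edges B T} = (\<Union>t\<in>T. {v \<in> B. vadd t v = w \<and> w \<in> B})"
    by (auto simp: shift_edges_def)
  also have "card \<dots> \<le> (\<Sum>t\<in>T. card {v \<in> B. vadd t v = w \<and> w \<in> B})"
    using fin_T by (rule card_UN_le)
  also have "\<dots> \<le> (\<Sum>t\<in>T. 1)"
  proof (rule sum_mono)
    fix t assume "t \<in> T"
    let ?V = "{v \<in> B. vadd t v = w \<and> w \<in> B}"
    have "\<forall>v1 \<in> ?V. \<forall>v2 \<in> ?V. v1 = v2"
      using \<open>t \<in> T\<close> assms(2) lengths by (metis (mono_tags, lifting) mem_Collect_eq subsetD vadd_left_cancel)
    then show "card ?V \<le> 1"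
      using assms(1) by (simp add: card_le_Suc0_iff_eq)
  qed
  finally show ?thesis
    by simp
qed

definition sparse_part :: "real \<Rightarrow> int list set \<Rightarrow> int list set \<Rightarrow> int list set \<Rightarrow> int list set" where
  "sparse_part D B T1 T2 =
     {v \<in> B - \<Union>(shift_nbrs B T1 ` T2). real (card (shift_nbrs B T1 v - \<Union>(shift_nbrs B T1 ` T2))) < D}"

lemma card_shift_edges_le_sparse_part:
  fixes D :: real
  assumes "finite B" "T1 \<subseteq> B" "card T1 \<le> q" and lengths: "\<And>x. x \<in> B \<Longrightarrow> length x = d"
  shows "card (shift_edges B T1)
           \<le> 2 * q * card (B - sparse_part D B T1 T2) + card (sparse_part D B T1 T2) * D"
proof (rule card_edges_le_degrees)
  have "finite T1"
    using assms(1,2) by (rule finite_subset[rotated])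
  then show "card {w. (v, w) \<in> shift_edges B T1} \<le> q" for v
    using card_shift_edges_out_le assms(3) le_trans by blast
  show "card {v. (v, w) \<in> shift_edges B T1} \<le> q" for w
    using card_shift_edges_in_le[OF assms(1,2) lengths] assms(3) le_trans by blast
  show "card {w \<in> sparse_part D B T1 T2. (v, w) \<in> shift_edges B T1} \<le> D"
    if "v \<in> sparse_part D B T1 T2" for v
  proof -
    let ?U = "\<Union>(shift_nbrs B T1 ` T2)"
    have "{w \<in> sparse_part D B T1 T2. (v, w) \<in> shift_edges B T1} \<subseteq> shift_nbrs B T1 v - ?U"
      by (auto simp: sparse_part_def shift_nbrs_def)
    then have "card {w \<in> sparse_part D B T1 T2. (v, w) \<in> shift_edges B T1} \<le> card (shift_nbrs B T1 v - ?U)"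
      using assms(1) shift_nbrs_subset by (meson card_mono finite_Diff finite_subset)
    with that show ?thesis
      by (auto simp: sparse_part_def)
  qed
qed (use assms(1) shift_edges_subset in \<open>auto simp: sparse_part_def\<close>)

lemma sum_powers_le_Suc_power: "(\<Sum>i\<le>k. n ^ i) \<le> (n + 1 :: nat) ^ k"
proof (induction k)
  case (Suc k)
  have "(\<Sum>i\<le>Suc k. n ^ i) \<le> (n + 1) ^ k + n * n ^ k"
    using Suc.IH by simp
  also have "\<dots> \<le> (n + 1) ^ k + n * (n + 1) ^ k"
    by (simp add: power_mono)
  finally show ?case by simp
qed simp

lemma card_subsets_card_le:
  assumes "finite G"
  shows "finite {T. T \<subseteq> G \<and> card T \<le> k}" and "card {T. T \<subseteq> G \<and> card T \<le> k} \<le> (card G + 1) ^ k"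
proof -
  let ?L = "{xs. set xs \<subseteq> G \<and> length xs \<le> k}"
  have subsets_lists: "{T. T \<subseteq> G \<and> card T \<le> k} \<subseteq> set ` ?L"
  proof
    fix T assume T: "T \<in> {T. T \<subseteq> G \<and> card T \<le> k}"
    then obtain xs where "set xs = T" "distinct xs"
      using assms finite_distinct_list finite_subset by (metis mem_Collect_eq)
    with T show "T \<in> set ` ?L"
      by (auto simp: distinct_card intro!: image_eqI[of _ _ xs])
  qed
  have fin_L: "finite ?L"
    using assms by (rule finite_lists_length_le)
  then show "finite {T. T \<subseteq> G \<and> card T \<le> k}"
    using subsets_lists finite_surj by blast
  have "card {T. T \<subseteq> G \<and> card T \<le> k} \<le> card ?L"
    using subsets_lists fin_L by (meson card_image_le card_mono finite_imageI order_trans)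
  also have "\<dots> = (\<Sum>i\<le>k. card G ^ i)"
    using assms by (rule card_lists_length_le)
  also have "\<dots> \<le> (card G + 1) ^ k"
    by (rule sum_powers_le_Suc_power)
  finally show "card {T. T \<subseteq> G \<and> card T \<le> k} \<le> (card G + 1) ^ k" .
qed

(*
  (T1, T2) is the fingerprint of a sum-free A in B: T1 is A \<inter> high_degree \<theta> B if this has fewer
  than q elements, and otherwise q elements of it, in whose shift graph A is independent; T2 is
  then a fingerprint of A in that graph as in fingerprint_exists.
*)
definition container :: "nat \<Rightarrow> real \<Rightarrow> real \<Rightarrow> int list set \<Rightarrow> int list set \<Rightarrow> int list set \<Rightarrow> int list set" where
  "container q \<theta> D B T1 T2 =
     (if card T1 < q then (B - high_degree \<theta> B) \<union> T1 else T2 \<union> sparse_part D B T1 T2)"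

definition container_step :: "nat \<Rightarrow> nat \<Rightarrow> real \<Rightarrow> real \<Rightarrow> int list set \<Rightarrow> int list set set" where
  "container_step q m \<theta> D B = {container q \<theta> D B T1 T2 | T1 T2.
     T1 \<subseteq> high_degree \<theta> B \<and> card T1 \<le> q \<and> T2 \<subseteq> B \<and> card T2 \<le> m}"

lemma container_step_subset: "container_step q m \<theta> D B \<subseteq> Pow B"
  by (auto simp: container_step_def container_def high_degree_def sparse_part_def)

lemma card_container_step_le:
  assumes "finite B"
  shows "finite (container_step q m \<theta> D B) \<and> card (container_step q m \<theta> D B) \<le> (card B + 1) ^ (q + m)"
proof -
  let ?S = "\<lambda>k. {T. T \<subseteq> B \<and> card T \<le> k}"
  have "container_step q m \<theta> D B \<subseteq> (\<lambda>(T1, T2). container q \<theta> D B T1 T2) ` (?S q \<times> ?S m)"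
    using high_degree_subset by (fastforce simp: container_step_def)
  moreover have "finite (?S q \<times> ?S m)"
    using card_subsets_card_le(1)[OF assms] by blast
  moreover have "card (?S q \<times> ?S m) \<le> (card B + 1) ^ (q + m)"
    using card_subsets_card_le(2)[OF assms] by (simp add: card_cartesian_product power_add mult_le_mono)
  ultimately show ?thesis
    by (meson card_image_le card_mono finite_imageI finite_subset order_trans)
qed

lemma container_covers:
  fixes \<theta> D :: real
  assumes "finite B" "A \<subseteq> B" "sum_free A" "0 < D"
  shows "\<exists>T1 T2. T1 \<subseteq> high_degree \<theta> B \<and> card T1 \<le> q \<and> T2 \<subseteq> B \<and> card T2 * D \<le> card B
           \<and> A \<subseteq> container q \<theta> D B T1 T2"
proof (cases "card (A \<inter> high_degree \<theta> B) < q")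
  case True
  then have "A \<subseteq> container q \<theta> D B (A \<inter> high_degree \<theta> B) {}"
    using assms(2) by (auto simp: container_def)
  with True show ?thesis
    by (intro exI[of _ "A \<inter> high_degree \<theta> B"] exI[of _ "{}"]) simp
next
  case False
  then obtain T1 where T1: "T1 \<subseteq> A" "T1 \<subseteq> high_degree \<theta> B" "card T1 = q"
    by (metis le_inf_iff not_less obtain_subset_with_card_n)
  have "finite A"
    using assms(1,2) by (rule finite_subset[rotated])
  obtain T2 where T2: "T2 \<subseteq> A" "card T2 * D \<le> card B"
    and sparse: "\<forall>v\<in>A. card (shift_nbrs B T1 v - \<Union>(shift_nbrs B T1 ` T2)) < D"
    using fingerprint_exists[where nbr = "shift_nbrs B T1", OF assms(1) shift_nbrs_subset assms(4) \<open>finite A\<close>]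
    by blast
  have "A \<subseteq> sparse_part D B T1 T2"
  proof
    fix v assume "v \<in> A"
    have "v \<notin> shift_nbrs B T1 t" if "t \<in> T2" for t
      using shift_nbrs_disjoint_if_sum_free[OF assms(3) T1(1)] \<open>v \<in> A\<close> that T2(1) by blast
    with sparse \<open>v \<in> A\<close> assms(2) show "v \<in> sparse_part D B T1 T2"
      by (auto simp: sparse_part_def)
  qed
  then have "A \<subseteq> container q \<theta> D B T1 T2"
    using T1(3) by (auto simp: container_def)
  moreover have "T2 \<subseteq> B"
    using T2(1) assms(2) by (rule order_trans)
  ultimately show ?thesis
    using T1(2,3) T2(2) by blast
qed

section \<open>Choice of parameters\<close>

locale schur_container_setup =
  fixes G :: "int list set" and d :: nat and \<epsilon> :: real
  assumes finite_G: "finite G"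
    and length_G: "\<And>x. x \<in> G \<Longrightarrow> length x = d"
    and eps_pos: "0 < \<epsilon>" and eps_le_1: "\<epsilon> \<le> 1"
    and G_large: "128 / \<epsilon>\<^sup>2 \<le> sqrt (card G)"
begin

(*
  q ~ sqrt N and m = O(sqrt N / eps) bound the sizes of the two fingerprints, and
  128 / eps^2 \<le> sqrt N is what makes either kind of container lose eps N / 8 elements.
*)
definition N :: real where "N = card G"
definition q :: nat where "q = nat \<lceil>sqrt N\<rceil>"
definition D :: real where "D = q * \<epsilon> / 8"
definition m :: nat where "m = nat \<lfloor>N / D\<rfloor>"
definition rounds :: nat where "rounds = nat \<lceil>8 / \<epsilon>\<rceil> + 1"
definition good :: "int list set \<Rightarrow> bool" where "good B \<longleftrightarrow> card (sum_pairs B) \<le> \<epsilon> * N\<^sup>2"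
definition step :: "int list set \<Rightarrow> int list set set" where "step = container_step q m (\<epsilon> * N / 2) D"
definition containers :: "int list set set" where "containers = refine_containers good step G rounds"

lemma N_nonneg: "0 \<le> N"
  by (simp add: N_def)

lemma eps_sq_sqrt_N_ge: "128 \<le> \<epsilon>\<^sup>2 * sqrt N"
  using G_large eps_pos by (simp add: N_def pos_divide_le_eq mult.commute)

lemma sqrt_N_ge_1: "1 \<le> sqrt N"
proof -
  have "128 \<le> sqrt N"
    using eps_sq_sqrt_N_ge eps_pos eps_le_1 N_nonneg mult_right_mono[of "\<epsilon>\<^sup>2" 1 "sqrt N"]
    by (simp add: power_le_one)
  then show ?thesis by linarith
qed

lemma N_ge_1: "1 \<le> N"
  using sqrt_N_ge_1 by simp

lemma card_le_N: "B \<subseteq> G \<Longrightarrow> card B \<le> N"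
  using card_mono[OF finite_G] by (simp add: N_def)

lemma sqrt_N_le_q: "sqrt N \<le> q"
  by (simp add: q_def real_nat_ceiling_ge)

lemma q_le_2_sqrt_N: "q \<le> 2 * sqrt N"
proof -
  have "real q = real_of_int \<lceil>sqrt N\<rceil>"
    using sqrt_N_ge_1 by (simp add: q_def)
  also have "\<dots> \<le> sqrt N + 1"
    by simp
  finally show ?thesis
    using sqrt_N_ge_1 by linarith
qed

lemma q_pos: "0 < q"
  using sqrt_N_le_q sqrt_N_ge_1 by linarith

lemma D_pos: "0 < D"
  using q_pos eps_pos by (simp add: D_def)

lemma q_le_eps_N: "q \<le> 3 * \<epsilon> * N / 8"
proof -
  have "\<epsilon> * (\<epsilon> * sqrt N) \<le> \<epsilon> * sqrt N"
    using eps_pos eps_le_1 N_nonneg by (intro mult_left_le_one_le) auto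
  then have "128 \<le> \<epsilon> * sqrt N"
    using eps_sq_sqrt_N_ge by (simp add: power2_eq_square mult.assoc)
  then have "16 * sqrt N \<le> 3 * \<epsilon> * sqrt N * sqrt N"
    using N_nonneg by (intro mult_right_mono) auto
  also have "\<dots> = 3 * \<epsilon> * N"
    using N_nonneg by (simp add: mult.assoc)
  finally show ?thesis
    using q_le_2_sqrt_N by linarith
qed

lemma m_le_N_div_D: "m \<le> N / D"
  using N_ge_1 D_pos by (simp add: m_def)

lemma m_le_sqrt_N: "m \<le> 8 / \<epsilon> * sqrt N"
proof -
  have "N / D = 8 * N / (q * \<epsilon>)"
    by (simp add: D_def)
  also have "\<dots> \<le> 8 * N / (sqrt N * \<epsilon>)"
    using sqrt_N_le_q sqrt_N_ge_1 N_nonneg eps_pos q_pos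
    by (auto intro!: divide_left_mono mult_right_mono mult_pos_pos)
  also have "\<dots> = 8 / \<epsilon> * sqrt N"
    using real_div_sqrt[OF N_nonneg] by (metis times_divide_times_eq mult.commute)
  finally show ?thesis
    using m_le_N_div_D by linarith
qed

lemma m_le_eps_N: "m \<le> \<epsilon> * N / 16"
proof -
  have "8 / \<epsilon> * sqrt N \<le> \<epsilon> * (sqrt N * sqrt N) / 16"
    using eps_sq_sqrt_N_ge eps_pos sqrt_N_ge_1 mult_right_mono[of 128 "\<epsilon>\<^sup>2 * sqrt N" "sqrt N"]
    by (simp add: field_simps power2_eq_square)
  then show ?thesis
    using m_le_sqrt_N N_ge_1 by simp
qed

lemma le_m_if:
  assumes "real k * D \<le> N"
  shows "k \<le> m"
proof -
  have "real k \<le> N / D"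
    using assms D_pos by (simp add: pos_le_divide_eq)
  then show ?thesis
    unfolding m_def by (rule le_nat_floor)
qed

lemma step_subset: "step B \<subseteq> Pow B"
  by (simp add: step_def container_step_subset)

lemma step_covers:
  assumes "B \<subseteq> G" "A \<subseteq> B" "sum_free A"
  shows "\<exists>B' \<in> step B. A \<subseteq> B'"
proof -
  have "finite B"
    using finite_G assms(1) by (rule finite_subset[rotated])
  then obtain T1 T2 where "T1 \<subseteq> high_degree (\<epsilon> * N / 2) B" "card T1 \<le> q" "T2 \<subseteq> B"
    and "card T2 * D \<le> card B" and A_sub: "A \<subseteq> container q (\<epsilon> * N / 2) D B T1 T2"
    using container_covers[OF _ assms(2,3) D_pos] by blast
  moreover have "card T2 \<le> m"
    using \<open>card T2 * D \<le> card B\<close> card_le_N[OF assms(1)] by (intro le_m_if) linarith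
  ultimately show ?thesis
    unfolding step_def container_step_def by blast
qed

lemma card_container_if_few_high:
  assumes "B \<subseteq> G" "\<not> good B" "card T1 < q"
  shows "card (container q (\<epsilon> * N / 2) D B T1 T2) + \<epsilon> * N / 8 \<le> card B"
proof -
  let ?X = "high_degree (\<epsilon> * N / 2) B"
  have "finite B"
    using finite_G assms(1) by (rule finite_subset[rotated])
  have "\<epsilon> * N\<^sup>2 < card (sum_pairs B)"
    using assms(2) by (simp add: good_def)
  also have "\<dots> \<le> N * (card ?X + \<epsilon> * N / 2)"
    using \<open>finite B\<close> card_le_N[OF assms(1)] by (rule card_sum_pairs_le_high_degree) (use eps_pos N_nonneg in simp)
  finally have "N * (\<epsilon> * N / 2) < N * card ?X"
    by (simp add: power2_eq_square algebra_simps)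
  then have many_high: "\<epsilon> * N / 2 < card ?X"
    using N_ge_1 by simp
  have "real (card (container q (\<epsilon> * N / 2) D B T1 T2)) \<le> real (card (B - ?X)) + card T1"
    unfolding of_nat_add[symmetric] of_nat_le_iff using assms(3) by (simp add: container_def card_Un_le)
  also have "\<dots> = real (card B) - card ?X + card T1"
    using card_Diff_subset[OF finite_subset[OF high_degree_subset \<open>finite B\<close>] high_degree_subset]
      card_mono[OF \<open>finite B\<close> high_degree_subset]
    by (simp add: of_nat_diff)
  finally show ?thesis
    using many_high assms(3) q_le_eps_N by linarith
qed

lemma card_container_if_many_high:
  assumes "B \<subseteq> G" "T1 \<subseteq> high_degree (\<epsilon> * N / 2) B" "card T1 = q" "card T2 \<le> m"
  shows "card (container q (\<epsilon> * N / 2) D B T1 T2) + \<epsilon> * N / 8 \<le> card B"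
proof -
  let ?S = "sparse_part D B T1 T2"
  have "finite B"
    using finite_G assms(1) by (rule finite_subset[rotated])
  have "T1 \<subseteq> B"
    using assms(2) high_degree_subset by blast
  have lengths: "length x = d" if "x \<in> B" for x
    using assms(1) that length_G by blast
  have S_sub: "?S \<subseteq> B"
    by (auto simp: sparse_part_def)
  have "q * (\<epsilon> * N / 2) = (\<Sum>t\<in>T1. \<epsilon> * N / 2)"
    using assms(3) by simp
  also have "\<dots> \<le> (\<Sum>t\<in>T1. real (sum_degree B t))"
    using assms(2) by (intro sum_mono) (auto simp: high_degree_def)
  also have "\<dots> = card (shift_edges B T1)"
    using card_shift_edges[OF \<open>finite B\<close> \<open>T1 \<subseteq> B\<close> lengths] by simp
  also have "\<dots> \<le> 2 * q * card (B - ?S) + card ?S * D"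
    using \<open>finite B\<close> \<open>T1 \<subseteq> B\<close> assms(3) lengths by (intro card_shift_edges_le_sparse_part) auto
  also have "\<dots> \<le> 2 * q * real (card B) - 2 * q * card ?S + N * D"
    using card_Diff_subset[OF finite_subset[OF S_sub \<open>finite B\<close>] S_sub] card_mono[OF \<open>finite B\<close> S_sub]
      card_le_N[OF order_trans[OF S_sub assms(1)]] D_pos
    by (simp add: of_nat_diff right_diff_distrib mult_right_mono)
  finally have "q * (\<epsilon> * N / 2) \<le> q * (2 * real (card B) - 2 * card ?S + \<epsilon> * N / 8)"
    by (simp add: D_def algebra_simps)
  then have "\<epsilon> * N / 2 \<le> 2 * real (card B) - 2 * card ?S + \<epsilon> * N / 8"
    using q_pos by simp
  moreover have "real (card (container q (\<epsilon> * N / 2) D B T1 T2)) \<le> real (card T2) + card ?S"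
    unfolding of_nat_add[symmetric] of_nat_le_iff using assms(3) by (simp add: container_def card_Un_le)
  moreover have "real (card T2) \<le> m"
    using assms(4) by simp
  ultimately show ?thesis
    using m_le_eps_N by linarith
qed

lemma step_shrinks:
  assumes "B \<subseteq> G" "\<not> good B" "B' \<in> step B"
  shows "card B' + \<epsilon> * N / 8 \<le> card B"
proof -
  obtain T1 T2 where B': "B' = container q (\<epsilon> * N / 2) D B T1 T2"
    and T1: "T1 \<subseteq> high_degree (\<epsilon> * N / 2) B" "card T1 \<le> q" and T2: "card T2 \<le> m"
    using assms(3) unfolding step_def container_step_def by blast
  show ?thesis
  proof (cases "card T1 < q")
    case True
    then show ?thesis
      unfolding B' using assms(1,2) by (rule card_container_if_few_high[rotated 2])
  next
    case False
    with T1 have "card T1 = q" by simp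
    with assms(1) T1(1) T2 show ?thesis
      unfolding B' by (intro card_container_if_many_high)
  qed
qed

lemma card_step_le:
  assumes "B \<subseteq> G"
  shows "finite (step B) \<and> card (step B) \<le> (card G + 1) ^ (q + m)"
proof -
  have "finite B"
    using finite_G assms by (rule finite_subset[rotated])
  moreover have "(card B + 1) ^ (q + m) \<le> (card G + 1) ^ (q + m)"
    using card_mono[OF finite_G assms] by (simp add: power_mono)
  ultimately show ?thesis
    unfolding step_def using card_container_step_le le_trans by blast
qed

lemma containers_subset: "B \<in> containers \<Longrightarrow> B \<subseteq> G"
  unfolding containers_def by (rule refine_containers_subset[OF step_subset])

lemma containers_cover:
  assumes "A \<subseteq> G" "sum_free A"
  shows "\<exists>B \<in> containers. A \<subseteq> B"
  unfolding containers_def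
proof (rule refine_containers_cover[OF step_subset assms(1)])
  show "\<exists>B' \<in> step B. A \<subseteq> B'" if "B \<subseteq> G" "A \<subseteq> B" for B
    using that assms(2) by (rule step_covers)
qed

lemma rounds_large: "8 < rounds * \<epsilon>"
proof -
  have "8 / \<epsilon> + 1 \<le> rounds"
    unfolding rounds_def using real_nat_ceiling_ge[of "8 / \<epsilon>"] by simp
  then have "(8 / \<epsilon> + 1) * \<epsilon> \<le> rounds * \<epsilon>"
    using eps_pos by (intro mult_right_mono) auto
  then show ?thesis
    using eps_pos by (simp add: distrib_right)
qed

lemma containers_good:
  assumes "B \<in> containers"
  shows "good B"
proof -
  have "good B \<or> card B + rounds * (\<epsilon> * N / 8) \<le> card G"
    using step_subset step_shrinks assms unfolding containers_def by (rule refine_containers_shrink)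
  moreover have "N < rounds * \<epsilon> * N / 8"
    using rounds_large N_ge_1 by simp
  ultimately show ?thesis
    by (simp add: N_def)
qed

lemma containers_schur_triples_le:
  assumes "B \<in> containers"
  shows "card (schur_triples B) \<le> \<epsilon> * N\<^sup>2"
proof -
  have "finite B"
    using finite_G containers_subset[OF assms] by (rule finite_subset[rotated])
  then have "real (card (schur_triples B)) \<le> card (sum_pairs B)"
    using card_schur_triples_le_sum_pairs by simp
  also have "\<dots> \<le> \<epsilon> * N\<^sup>2"
    using containers_good[OF assms] by (simp add: good_def)
  finally show ?thesis .
qed

lemma finite_containers: "finite containers"
  and card_containers_le: "card containers \<le> (card G + 1) ^ ((q + m) * rounds)"
proof -
  have "finite containers \<and> card containers \<le> ((card G + 1) ^ (q + m)) ^ rounds"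
    unfolding containers_def using step_subset card_step_le
    by (rule card_refine_containers_le) (simp_all add: one_le_power)
  then show "finite containers" "card containers \<le> (card G + 1) ^ ((q + m) * rounds)"
    by (simp_all add: power_mult)
qed

lemma card_containers_pos: "0 < card containers"
  using finite_containers containers_cover[of "{}"] by (auto simp: sum_free_def card_gt_0_iff)

lemma log_card_containers_le:
  "log 2 (card containers) \<le> rounds * (2 + 8 / \<epsilon>) * sqrt N * log 2 (N + 1)"
proof -
  have "real (card containers) \<le> (N + 1) ^ ((q + m) * rounds)"
    using of_nat_mono[OF card_containers_le, where 'a = real] by (simp add: N_def add.commute)
  then have "log 2 (card containers) \<le> log 2 ((N + 1) ^ ((q + m) * rounds))"
    using card_containers_pos by (intro log_mono) auto
  also have "\<dots> = (q + m) * rounds * log 2 (N + 1)"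
    using N_nonneg by (simp add: log_nat_power)
  also have "\<dots> \<le> (2 + 8 / \<epsilon>) * sqrt N * rounds * log 2 (N + 1)"
  proof -
    have "real q + real m \<le> (2 + 8 / \<epsilon>) * sqrt N"
      using q_le_2_sqrt_N m_le_sqrt_N by (simp add: algebra_simps)
    then show ?thesis
      using N_nonneg by (auto intro!: mult_right_mono)
  qed
  finally show ?thesis
    by (simp add: mult_ac)
qed

end

section \<open>The grid\<close>

lemma grid_eq_lists: "grid n d = {xs. set xs \<subseteq> {1..int n} \<and> length xs = d}"
  by (auto simp: grid_def)

lemma finite_grid: "finite (grid n d)"
  by (simp add: grid_eq_lists finite_lists_length_eq)

lemma card_grid: "card (grid n d) = n ^ d"
  by (simp add: grid_eq_lists card_lists_length_eq)

lemma length_grid: "x \<in> grid n d \<Longrightarrow> length x = d"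
  by (simp add: grid_def)

lemma eventually_schur_container_setup_grid:
  assumes "1 \<le> d" "0 < \<epsilon>" "\<epsilon> \<le> 1"
  shows "\<forall>\<^sub>F n in at_top. schur_container_setup (grid n d) d \<epsilon>"
proof -
  have "\<forall>\<^sub>F n in at_top. max 1 ((128 / \<epsilon>\<^sup>2)\<^sup>2) \<le> real n"
    using filterlim_real_sequentially unfolding filterlim_at_top by blast
  then show ?thesis
  proof eventually_elim
    case (elim n)
    then have "real n \<le> real n ^ d"
      using assms(1) power_increasing[of 1 d "real n"] by simp
    with elim have "(128 / \<epsilon>\<^sup>2)\<^sup>2 \<le> real n ^ d"
      by linarith
    then have "128 / \<epsilon>\<^sup>2 \<le> sqrt (card (grid n d))"
      by (simp add: card_grid real_le_rsqrt)
    with assms show ?case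
      by unfold_locales (auto simp: finite_grid length_grid)
  qed
qed

lemma log_card_grid_containers_bigo:
  assumes "1 \<le> d" "0 < \<epsilon>" "\<epsilon> \<le> 1"
  shows "(\<lambda>n. log 2 (card (schur_container_setup.containers (grid n d) \<epsilon>)))
           \<in> O(\<lambda>n. sqrt (real n ^ d) * log 2 (real n ^ d + 1))"
proof (rule bigoI)
  show "\<forall>\<^sub>F n in at_top. norm (log 2 (card (schur_container_setup.containers (grid n d) \<epsilon>)))
          \<le> schur_container_setup.rounds \<epsilon> * (2 + 8 / \<epsilon>) * norm (sqrt (real n ^ d) * log 2 (real n ^ d + 1))"
    using eventually_schur_container_setup_grid[OF assms]
  proof eventually_elim
    case (elim n)
    then interpret schur_container_setup "grid n d" d \<epsilon> .
    have "N = real n ^ d"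
      by (simp add: N_def card_grid)
    moreover have "0 \<le> log 2 (real n ^ d + 1)"
      by (simp add: zero_le_log_cancel_iff add_nonneg_pos)
    ultimately show ?case
      using log_card_containers_le card_containers_pos by (simp add: zero_le_log_cancel_iff mult.assoc)
  qed
qed

lemma sqrt_log_power_smallo:
  assumes "1 \<le> d"
  shows "(\<lambda>n::nat. sqrt (real n ^ d) * log 2 (real n ^ d + 1)) \<in> o(\<lambda>n. real n ^ d)"
proof -
  have "(\<lambda>x::real. sqrt x * log 2 (x + 1)) \<in> o(\<lambda>x. x)"
    by real_asymp
  moreover have "filterlim (\<lambda>n::nat. real n ^ d) at_top at_top"
    using assms by (intro filterlim_pow_at_top filterlim_real_sequentially) auto
  ultimately show ?thesis
    by (rule landau_o.small.compose)
qed

theorem mainTheorem5: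
  fixes d :: nat and \<epsilon> :: real
  assumes "d \<ge> 1" and "0 < \<epsilon>" and "\<epsilon> < 1"
  shows "\<exists>(n0::nat) (C :: nat \<Rightarrow> int list set set).
           (\<forall>n\<ge>n0.
              C n \<subseteq> Pow (grid n d) \<and>
              (\<forall>A. A \<subseteq> grid n d \<and> sum_free A \<longrightarrow> (\<exists>B\<in>C n. A \<subseteq> B)) \<and>
              (\<forall>B\<in>C n. real (card (schur_triples B)) \<le> \<epsilon> * real n ^ (2 * d))) \<and>
           (\<lambda>n. log 2 (real (card (C n)))) \<in> o(\<lambda>n. real n ^ d)"
proof -
  obtain n0 where large_n: "\<And>n. n0 \<le> n \<Longrightarrow> schur_container_setup (grid n d) d \<epsilon>"
    using eventually_schur_container_setup_grid[of d \<epsilon>] assms by (auto simp: eventually_at_top_linorder)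
  define C where "C n = schur_container_setup.containers (grid n d) \<epsilon>" for n
  have "C n \<subseteq> Pow (grid n d) \<and>
        (\<forall>A. A \<subseteq> grid n d \<and> sum_free A \<longrightarrow> (\<exists>B\<in>C n. A \<subseteq> B)) \<and>
        (\<forall>B\<in>C n. real (card (schur_triples B)) \<le> \<epsilon> * real n ^ (2 * d))" if "n0 \<le> n" for n
  proof -
    interpret schur_container_setup "grid n d" d \<epsilon>
      using large_n[OF that] .
    have "N\<^sup>2 = real n ^ (2 * d)"
      by (simp add: N_def card_grid power_mult[symmetric] mult.commute)
    then show ?thesis
      using containers_subset containers_cover containers_schur_triples_le by (auto simp: C_def)
  qed
  moreover have "(\<lambda>n. log 2 (real (card (C n)))) \<in> o(\<lambda>n. real n ^ d)"
    unfolding C_def using assms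
    by (intro landau_o.big_small_trans[OF log_card_grid_containers_bigo sqrt_log_power_smallo]) auto
  ultimately show ?thesis
    by blast
qed

end
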